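(* Consider the inhomogeneous stochastic higher spin six vertex model in the quadrant $\mathbb{Z}_{\ge1}^2$ with the step boundary condition and parameters $u_1,u_2,\ldots\in(-\infty,0)$, $a_1,a_2,\ldots\in(0,+\infty)$, $\nu_1,\nu_2,\ldots\in(0,1)$, where the $a_i$'s and the $\nu_i$'s are uniformly bounded away from the endpoints of their respective intervals. Then for each $T=1,2,\ldots$, almost surely there are exactly $T$ up-right paths crossing the horizontal line at height $T+\frac12$ (equivalently, the total number of arrows on the vertical edges from $(x,T)$ to $(x,T+1)$, $x\ge1$, equals $T$); in other words, paths cannot stay horizontal forever.
   Context: Fix $q\in(0,1)$. For parameters $u,a,\nu$ define stochastic vertex weights $\mathsf{L}_{u,a,\nu}(i_1,j_1;i_2,j_2)$, $i_1,i_2\in\mathbb{Z}_{\ge0}$, $j_1,j_2\in\{0,1\}$ (here $i_1,j_1$ are the numbers of arrows entering a vertex from below and from the left, $i_2,j_2$ the numbers leaving upwards and to the right), which vanish unless $i_1+j_1=i_2+j_2$, and for $g\in\mathbb{Z}_{\ge0}$: $\mathsf{L}(g,0;g,0)=\frac{1-auq^g}{1-au}$, $\mathsf{L}(g,0;g-1,1)=\frac{-au(1-q^g)}{1-au}$, $\mathsf{L}(g,1;g,1)=\frac{\nu q^g-au}{1-au}$, $\mathsf{L}(g,1;g+1,0)=\frac{1-\nu q^g}{1-au}$. The stochastic higher spin six vertex model with the step boundary condition is the random collection of up-right paths in $\mathbb{Z}_{\ge1}^2$ (paths may share vertices and vertical edges, so vertical edges carry any number of arrows, but each horizontal edge carries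 at most one arrow) defined as follows: one arrow enters each vertex $(1,T)$, $T\ge1$, from the left, and no arrow enters any vertex $(N,1)$ from below. Inductively over $n=2,3,\ldots$, for each vertex $(N,T)$ with $N+T=n$, given the numbers $(i_1,j_1)$ of arrows entering it from below and from the left, the outgoing numbers $(i_2,j_2)$ are sampled independently with probabilities $\mathsf{L}_{u_T,a_N,\nu_N}(i_1,j_1;i_2,j_2)$. *)

theory Defs
  imports "HOL-Probability.Probability"
begin

text \<open>Stochastic vertex weight L_{u,a,nu}(i1,j1;i2,j2) with parameter q.
  i1 / j1: arrows entering from below / from the left;
  i2 / j2: arrows leaving upwards / to the right.\<close>
definition Lw :: "real \<Rightarrow> real \<Rightarrow> real \<Rightarrow> real \<Rightarrow> nat \<Rightarrow> nat \<Rightarrow> nat \<Rightarrow> nat \<Rightarrow> real" where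
  "Lw q u a nu i1 j1 i2 j2 =
    (if i1 + j1 \<noteq> i2 + j2 then 0
     else if j1 = 0 \<and> j2 = 0 then (1 - a * u * q ^ i1) / (1 - a * u)
     else if j1 = 0 \<and> j2 = 1 then (- a * u * (1 - q ^ i1)) / (1 - a * u)
     else if j1 = 1 \<and> j2 = 1 then (nu * q ^ i1 - a * u) / (1 - a * u)
     else if j1 = 1 \<and> j2 = 0 then (1 - nu * q ^ i1) / (1 - a * u)
     else 0)"

text \<open>Deterministic realisation of the model driven by the numbers w (N,T) (which will be
  independent uniform random variables on [0,1]).  vtx q u a nu w N T = (i2, j2) is the pair
  (number of arrows leaving vertex (N,T) upwards, number leaving to the right), for N, T \<ge> 1.
  Inputs: from the left 1 arrow if N = 1, else the right output of (N-1,T);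
  from below 0 arrows if T = 1, else the upward output of (N,T-1).
  The vertex emits an arrow to the right iff w (N,T) < L(i1,j1; i1+j1-1, 1), which happens with
  probability L(i1,j1;i1+j1-1,1) when w (N,T) is uniform on [0,1]; the two possible outcomes
  have probabilities given by the weights L.\<close>
function vtx :: "real \<Rightarrow> (nat \<Rightarrow> real) \<Rightarrow> (nat \<Rightarrow> real) \<Rightarrow> (nat \<Rightarrow> real) \<Rightarrow> (nat \<times> nat \<Rightarrow> real)
    \<Rightarrow> nat \<Rightarrow> nat \<Rightarrow> nat \<times> nat" where
  "vtx q u a nu w N T =
    (let i1 = (if T \<le> 1 then 0 else fst (vtx q u a nu w N (T - 1)));
         j1 = (if N \<le> 1 then 1 else snd (vtx q u a nu w (N - 1) T));
         j2 = (if w (N, T) < Lw q (u T) (a N) (nu N) i1 j1 (i1 + j1 - 1) 1 then 1 else 0)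
     in (i1 + j1 - j2, j2))"
  by pat_completeness auto
termination
  by (relation "Wellfounded.measure (\<lambda>(q, u, a, nu, w, N, T). N + T)") auto

end

theory Submission
  imports Defs
begin

text \<open>Arrows are conserved at every vertex (the uniforms are almost surely nonnegative), so in
  row T the arrows sent up from columns 1..K, plus the arrow possibly still travelling right after
  column K, equal the arrows entering from below in columns 1..K plus the boundary arrow. By
  induction on T the arrows of row T-1 occupy finitely many columns. Beyond them the horizontal
  arrow of row T passes each empty vertex with probability L(0,1;0,1), which the bounds on a and nu
  keep uniformly below 1, so by independence it almost surely turns up somewhere, after which row T
  is empty. Hence row T carries exactly one arrow more than row T-1.\<close>

lemma finite_support_sum_atLeastAtMost:
  fixes f :: "nat \<Rightarrow> 'a::comm_monoid_add"
  assumes "\<forall>N>K. f N = 0"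
  shows "finite {N. N \<ge> 1 \<and> f N \<noteq> 0} \<and> (\<Sum>N | N \<ge> 1 \<and> f N \<noteq> 0. f N) = (\<Sum>N=1..K. f N)"
proof -
  have support: "{N. N \<ge> 1 \<and> f N \<noteq> 0} \<subseteq> {1..K}"
    using assms by (auto simp: not_less[symmetric])
  then have "(\<Sum>N | N \<ge> 1 \<and> f N \<noteq> 0. f N) = (\<Sum>N=1..K. f N)"
    by (intro sum.mono_neutral_left) auto
  then show ?thesis using support finite_subset by blast
qed

lemma Lw_pass_right_le:
  assumes "u < 0" "0 \<le> a" "a \<le> A" "0 \<le> e" "nu \<le> 1 - e"
  shows "Lw q u a nu 0 1 0 1 \<le> 1 - e / (1 - A * u)"
proof -
  have "a * u \<le> 0" "A * u \<le> a * u"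
    using assms by (auto simp: mult_nonneg_nonpos mult_right_mono_neg)
  then have "e / (1 - A * u) \<le> e / (1 - a * u)"
    using assms(4) by (intro divide_left_mono) auto
  also have "\<dots> \<le> (1 - nu) / (1 - a * u)"
    using assms(5) \<open>a * u \<le> 0\<close> by (intro divide_right_mono) auto
  also have "(1 - nu) / (1 - a * u) = 1 - Lw q u a nu 0 1 0 1"
    using \<open>a * u \<le> 0\<close> by (simp add: Lw_def field_simps)
  finally show ?thesis by linarith
qed

declare vtx.simps[simp del]

context
  fixes q :: real and u a nu :: "nat \<Rightarrow> real"
begin

abbreviation arrows_up :: "(nat \<times> nat \<Rightarrow> real) \<Rightarrow> nat \<Rightarrow> nat \<Rightarrow> nat" where
  "arrows_up w N T \<equiv> fst (vtx q u a nu w N T)"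

abbreviation arrows_right :: "(nat \<times> nat \<Rightarrow> real) \<Rightarrow> nat \<Rightarrow> nat \<Rightarrow> nat" where
  "arrows_right w N T \<equiv> snd (vtx q u a nu w N T)"

abbreviation arrows_below :: "(nat \<times> nat \<Rightarrow> real) \<Rightarrow> nat \<Rightarrow> nat \<Rightarrow> nat" where
  "arrows_below w N T \<equiv> if T \<le> 1 then 0 else arrows_up w N (T - 1)"

abbreviation arrows_left :: "(nat \<times> nat \<Rightarrow> real) \<Rightarrow> nat \<Rightarrow> nat \<Rightarrow> nat" where
  "arrows_left w N T \<equiv> if N \<le> 1 then 1 else arrows_right w (N - 1) T"

lemma arrows_right_eq:
  "arrows_right w N T =
    (if w (N, T) < Lw q (u T) (a N) (nu N) (arrows_below w N T) (arrows_left w N T)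
                     (arrows_below w N T + arrows_left w N T - 1) 1 then 1 else 0)"
  by (subst vtx.simps) (simp only: Let_def snd_conv)

lemma arrows_up_eq:
  "arrows_up w N T = arrows_below w N T + arrows_left w N T - arrows_right w N T"
  by (subst (1 2) vtx.simps) (simp only: Let_def fst_conv snd_conv)

lemma arrows_right_le_1: "arrows_right w N T \<le> 1"
  by (subst arrows_right_eq) simp

lemma arrow_conservation:
  assumes "0 \<le> w (N, T)"
  shows "arrows_up w N T + arrows_right w N T = arrows_below w N T + arrows_left w N T"
proof -
  have "arrows_right w N T \<le> arrows_below w N T + arrows_left w N T"
  proof (cases "arrows_below w N T + arrows_left w N T = 0")
    case True
    \<comment> \<open>here the weight of emitting an arrow is 0, so \<open>0 \<le> w (N, T)\<close> forbids it\<close>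
    then show ?thesis
      using assms by (simp add: arrows_right_eq[of w N T] Lw_def)
  next
    case False
    then show ?thesis using arrows_right_le_1[of w N T] by linarith
  qed
  then show ?thesis using arrows_up_eq[of w N T] by linarith
qed

lemma row_arrow_count:
  assumes "\<And>N. 0 \<le> w (N, T)" and "K \<ge> 1"
  shows "(\<Sum>N=1..K. arrows_up w N T) + arrows_right w K T = (\<Sum>N=1..K. arrows_below w N T) + 1"
  using \<open>K \<ge> 1\<close>
proof (induction K rule: dec_induct)
  case base
  then show ?case using arrow_conservation[of w 1 T, OF assms(1)] by simp
next
  case (step K)
  then show ?case using arrow_conservation[of w "Suc K" T, OF assms(1)] by simp
qed

lemma arrow_turns_up:
  assumes "N \<ge> 2" and "arrows_below w N T = 0" and "arrows_right w (N - 1) T = 1"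
    and "Lw q (u T) (a N) (nu N) 0 1 0 1 \<le> w (N, T)"
  shows "arrows_right w N T = 0"
  using assms by (simp add: arrows_right_eq[of w N T])

lemma row_empty_after:
  assumes "\<And>N. 0 \<le> w (N, T)" and "N0 \<ge> 1" and "arrows_right w N0 T = 0"
    and "\<And>N. N > N0 \<Longrightarrow> arrows_below w N T = 0" and "N \<ge> N0"
  shows "arrows_right w N T = 0 \<and> (N > N0 \<longrightarrow> arrows_up w N T = 0)"
  using \<open>N \<ge> N0\<close>
proof (induction N rule: dec_induct)
  case base
  then show ?case using assms(3) by simp
next
  case (step N)
  then show ?case
    using arrow_conservation[of w "Suc N" T, OF assms(1)] assms(2) assms(4)[of "Suc N"] by simp
qed

lemma row_arrow_total_step:
  assumes w0: "\<And>N. 0 \<le> w (N, T)"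
    and below_support: "\<And>N. N > K \<Longrightarrow> arrows_below w N T = 0"
    and pass: "N \<ge> K + 2" "Lw q (u T) (a N) (nu N) 0 1 0 1 \<le> w (N, T)"
  shows "\<exists>K'. (\<forall>N>K'. arrows_up w N T = 0) \<and>
    (\<Sum>N=1..K'. arrows_up w N T) = (\<Sum>N=1..K. arrows_below w N T) + 1"
proof -
  obtain N0 where N0: "N0 > K" "arrows_right w N0 T = 0"
  proof (cases "arrows_right w (N - 1) T = 0")
    case True
    then show ?thesis using that[of "N - 1"] pass(1) by simp
  next
    case False
    then have "arrows_right w (N - 1) T = 1" using arrows_right_le_1[of w "N - 1" T] by linarith
    then have "arrows_right w N T = 0"
      using arrow_turns_up below_support[of N] pass by simp
    then show ?thesis using that[of N] pass(1) by simp
  qed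
  have up_support: "\<forall>N>N0. arrows_up w N T = 0"
    using row_empty_after[OF w0 _ N0(2) below_support] N0(1) by simp
  have "(\<Sum>N=1..N0. arrows_up w N T) = (\<Sum>N=1..N0. arrows_below w N T) + 1"
    using row_arrow_count[of w T N0, OF w0] N0 by simp
  also have "(\<Sum>N=1..N0. arrows_below w N T) = (\<Sum>N=1..K. arrows_below w N T)"
    using N0(1) below_support by (intro sum.mono_neutral_right) auto
  finally show ?thesis using up_support by blast
qed

lemma row_arrow_total:
  assumes w0: "\<And>p. 0 \<le> w p"
    and pass: "\<And>t K. t \<ge> 1 \<Longrightarrow> \<exists>N\<ge>K. Lw q (u t) (a N) (nu N) 0 1 0 1 \<le> w (N, t)"
    and "T \<ge> 1"
  shows "\<exists>K. (\<forall>N>K. arrows_up w N T = 0) \<and> (\<Sum>N=1..K. arrows_up w N T) = T"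
  using \<open>T \<ge> 1\<close>
proof (induction T rule: dec_induct)
  case base
  obtain N where "N \<ge> 2" "Lw q (u 1) (a N) (nu N) 0 1 0 1 \<le> w (N, 1)"
    using pass[of 1 2] by auto
  then show ?case using row_arrow_total_step[of w 1 0 N] w0 by simp
next
  case (step T)
  then obtain K where K: "\<forall>N>K. arrows_up w N T = 0" "(\<Sum>N=1..K. arrows_up w N T) = T"
    by blast
  obtain N where "N \<ge> K + 2" "Lw q (u (Suc T)) (a N) (nu N) 0 1 0 1 \<le> w (N, Suc T)"
    using pass[of "Suc T" "K + 2"] by auto
  then show ?case using row_arrow_total_step[of w "Suc T" K N] w0 K step.hyps by simp
qed

end

context prob_space
begin

lemma AE_uniform_nonneg:
  assumes X: "random_variable borel X"
    and unif: "distr M borel X = uniform_measure lborel {0..1::real}"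
  shows "AE \<omega> in M. 0 \<le> X \<omega>"
proof -
  have "AE x in distr M borel X. 0 \<le> x"
    unfolding unif by (rule AE_uniform_measureI) auto
  then show ?thesis using X by (subst (asm) AE_distr_iff) auto
qed

lemma prob_uniform_less:
  assumes X: "random_variable borel X"
    and unif: "distr M borel X = uniform_measure lborel {0..1::real}"
    and "0 \<le> c" "c \<le> 1"
  shows "prob {\<omega> \<in> space M. X \<omega> < c} = c"
proof -
  have "prob {\<omega> \<in> space M. X \<omega> < c} = measure (distr M borel X) {..<c}"
    using X by (simp add: measure_distr vimage_def Int_def conj_commute)
  also have "\<dots> = measure lborel ({0..1} \<inter> {..<c}) / measure lborel {0..1::real}"
    unfolding unif by simp
  also have "{0..1} \<inter> {..<c} = {0..<c}"
    using \<open>c \<le> 1\<close> by auto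
  finally show ?thesis using \<open>0 \<le> c\<close> by simp
qed

lemma AE_exists_uniform_ge:
  assumes indep: "indep_vars (\<lambda>_. borel) X I"
    and unif: "\<And>i. i \<in> I \<Longrightarrow> distr M borel (X i) = uniform_measure lborel {0..1::real}"
    and I: "countable I" "infinite I"
    and c: "0 \<le> c" "c < 1"
  shows "AE \<omega> in M. \<exists>i\<in>I. c \<le> X i \<omega>"
proof -
  have X[measurable]: "X i \<in> borel_measurable M" if "i \<in> I" for i
    using indep that unfolding indep_vars_def2 by blast
  define S where "S = {\<omega> \<in> space M. \<forall>i\<in>I. X i \<omega> < c}"
  have S_sets: "S \<in> sets M"
    unfolding S_def using I(1) by (intro sets.sets_Collect_countable_All') auto
  have "prob S \<le> c ^ n" if "n \<ge> 1" for n
  proof -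
    obtain J where J: "finite J" "card J = n" "J \<subseteq> I"
      using infinite_arbitrarily_large[OF I(2)] by blast
    have "J \<noteq> {}" using J(2) that by auto
    have "S \<subseteq> (\<Inter>i\<in>J. X i -` {..<c} \<inter> space M)"
      using J(3) unfolding S_def by auto
    then have "prob S \<le> prob (\<Inter>i\<in>J. X i -` {..<c} \<inter> space M)"
      using J \<open>J \<noteq> {}\<close> by (intro finite_measure_mono sets.finite_INT measurable_sets[OF X]) auto
    also have "\<dots> = (\<Prod>i\<in>J. prob (X i -` {..<c} \<inter> space M))"
      using J \<open>J \<noteq> {}\<close> by (intro indep_varsD[OF indep]) auto
    also have "\<dots> = c ^ n"
      using J c prob_uniform_less[OF X unif, of _ c]
      by (simp add: vimage_def Int_def conj_commute subset_eq)
    finally show ?thesis .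
  qed
  moreover have "(\<lambda>n. c ^ n) \<longlonglongrightarrow> 0"
    using c by (intro LIMSEQ_power_zero) auto
  ultimately have "prob S \<le> 0"
    by (intro LIMSEQ_le_const[where X = "\<lambda>n. c ^ n"]) auto
  then have "emeasure M S = 0"
    by (simp add: emeasure_eq_measure measure_le_0_iff)
  then show ?thesis
    using S_sets by (intro AE_I[where N = S]) (auto simp: S_def not_le)
qed

end

theorem lemma3p1:
  fixes q :: real and u a nu :: "nat \<Rightarrow> real"
    and M :: "'w measure" and U :: "nat \<times> nat \<Rightarrow> 'w \<Rightarrow> real"
  assumes q: "0 < q" "q < 1"
    and u_neg: "\<And>T. T \<ge> 1 \<Longrightarrow> u T < 0"
    and a_bd: "\<exists>\<epsilon>>0. \<forall>N\<ge>1. \<epsilon> \<le> a N \<and> a N \<le> 1 / \<epsilon>"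
    and nu_bd: "\<exists>\<epsilon>>0. \<forall>N\<ge>1. \<epsilon> \<le> nu N \<and> nu N \<le> 1 - \<epsilon>"
    and M: "prob_space M"
    and indep: "prob_space.indep_vars M (\<lambda>_. borel) U UNIV"
    and unif: "\<And>p. distr M borel (U p) = uniform_measure lborel {0..1::real}"
    and T: "T \<ge> 1"
  shows "AE \<omega> in M.
           finite {x. x \<ge> 1 \<and> fst (vtx q u a nu (\<lambda>p. U p \<omega>) x T) \<noteq> 0} \<and>
           (\<Sum>x\<in>{x. x \<ge> 1 \<and> fst (vtx q u a nu (\<lambda>p. U p \<omega>) x T) \<noteq> 0}.
               fst (vtx q u a nu (\<lambda>p. U p \<omega>) x T)) = T"
proof -
  interpret prob_space M by (rule M)
  obtain \<epsilon>a where \<epsilon>a: "\<epsilon>a > 0" "\<And>N. N \<ge> 1 \<Longrightarrow> \<epsilon>a \<le> a N \<and> a N \<le> 1 / \<epsilon>a"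
    using a_bd by blast
  obtain \<epsilon> where \<epsilon>: "\<epsilon> > 0" "\<And>N. N \<ge> 1 \<Longrightarrow> \<epsilon> \<le> nu N \<and> nu N \<le> 1 - \<epsilon>"
    using nu_bd by blast
  define c where "c t = 1 - \<epsilon> / (1 - 1 / \<epsilon>a * u t)" for t
  have pass_le: "Lw q (u t) (a N) (nu N) 0 1 0 1 \<le> c t" if "t \<ge> 1" "N \<ge> 1" for t N
    unfolding c_def
    by (rule Lw_pass_right_le) (use u_neg[OF that(1)] \<epsilon>a(2)[OF that(2)] \<epsilon>(2)[OF that(2)] \<epsilon>a(1) \<epsilon>(1) in auto)
  have c_range: "0 \<le> c t \<and> c t < 1" if "t \<ge> 1" for t
  proof -
    have "\<epsilon> \<le> 1"
      using \<epsilon>(2)[of 1] by simp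
    moreover have "1 / \<epsilon>a * u t \<le> 0"
      using u_neg[OF that] \<epsilon>a(1) by (intro mult_nonneg_nonpos) auto
    ultimately have "0 < \<epsilon> / (1 - 1 / \<epsilon>a * u t)" "\<epsilon> / (1 - 1 / \<epsilon>a * u t) \<le> 1"
      using \<epsilon>(1) by auto
    then show ?thesis unfolding c_def by linarith
  qed
  have U_rv: "random_variable borel (U p)" for p
    using indep unfolding indep_vars_def2 by blast
  have "AE \<omega> in M. \<forall>p. 0 \<le> U p \<omega>"
    unfolding AE_all_countable using AE_uniform_nonneg[OF U_rv unif] by blast
  moreover have "AE \<omega> in M. \<forall>t K. t \<ge> 1 \<longrightarrow> (\<exists>N\<ge>max K 1. c t \<le> U (N, t) \<omega>)"
    unfolding AE_all_countable
  proof (intro allI)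
    fix t K :: nat
    have "AE \<omega> in M. \<exists>p\<in>{max K 1..} \<times> {t}. c t \<le> U p \<omega>" if "t \<ge> 1"
      using c_range[OF that] indep_vars_subset[OF indep]
      by (intro AE_exists_uniform_ge unif) (auto simp: finite_cartesian_product_iff infinite_Ici)
    then show "AE \<omega> in M. t \<ge> 1 \<longrightarrow> (\<exists>N\<ge>max K 1. c t \<le> U (N, t) \<omega>)"
      by (cases "t \<ge> 1") (auto elim!: eventually_mono)
  qed
  ultimately show ?thesis
  proof eventually_elim
    case (elim \<omega>)
    have pass: "\<exists>N\<ge>K. Lw q (u t) (a N) (nu N) 0 1 0 1 \<le> U (N, t) \<omega>" if t: "t \<ge> 1" for t K
    proof -
      obtain N where "N \<ge> max K 1" "c t \<le> U (N, t) \<omega>"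
        using elim(2) t by blast
      then show ?thesis
        using pass_le[OF t, of N] by (intro exI[of _ N]) auto
    qed
    obtain K where "\<forall>N>K. fst (vtx q u a nu (\<lambda>p. U p \<omega>) N T) = 0"
        "(\<Sum>N=1..K. fst (vtx q u a nu (\<lambda>p. U p \<omega>) N T)) = T"
      using row_arrow_total[where w = "\<lambda>p. U p \<omega>", OF elim(1)[rule_format] pass T] by blast
    from finite_support_sum_atLeastAtMost[OF this(1)] this(2) show ?case by simp
  qed
qed

end
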